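(* Let $G$ be a graph of order $n\ge1$. Then $\operatorname{zir}(G)=1$ if and only if $G\cong P_n$ or $G\cong K_{1,n-1}$.
   Context: $P_n$ is the path on $n$ vertices, $K_{1,n-1}$ the star. A nonempty $F\subseteq V(G)$ is a fort if every $v\notin F$ has $|N(v)\cap F|\ne1$. A private fort of $x\in S$ relative to $S$ is a fort $F$ with $S\cap F=\{x\}$; $S$ is a ZIr-set if every element of $S$ has a private fort. $\operatorname{zir}(G)$ is the minimum cardinality of an inclusion-maximal ZIr-set. *)

theory Defs
  imports Main
begin

definition graph :: "'a set \<Rightarrow> ('a \<Rightarrow> 'a \<Rightarrow> bool) \<Rightarrow> bool" where
  "graph V E \<longleftrightarrow> finite V \<and> (\<forall>u v. E u v \<longrightarrow> u \<in> V \<and> v \<in> V)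
     \<and> (\<forall>u v. E u v \<longrightarrow> E v u) \<and> (\<forall>u. \<not> E u u)"

definition nbhd :: "'a set \<Rightarrow> ('a \<Rightarrow> 'a \<Rightarrow> bool) \<Rightarrow> 'a \<Rightarrow> 'a set" where
  "nbhd V E v = {u \<in> V. E v u}"

definition is_fort :: "'a set \<Rightarrow> ('a \<Rightarrow> 'a \<Rightarrow> bool) \<Rightarrow> 'a set \<Rightarrow> bool" where
  "is_fort V E F \<longleftrightarrow> F \<noteq> {} \<and> F \<subseteq> V \<and>
     (\<forall>v \<in> V - F. card (nbhd V E v \<inter> F) \<noteq> 1)"

definition private_fort :: "'a set \<Rightarrow> ('a \<Rightarrow> 'a \<Rightarrow> bool) \<Rightarrow> 'a set \<Rightarrow> 'a \<Rightarrow> 'a set \<Rightarrow> bool" where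
  "private_fort V E S x F \<longleftrightarrow> is_fort V E F \<and> S \<inter> F = {x}"

definition ZIr_set :: "'a set \<Rightarrow> ('a \<Rightarrow> 'a \<Rightarrow> bool) \<Rightarrow> 'a set \<Rightarrow> bool" where
  "ZIr_set V E S \<longleftrightarrow> S \<subseteq> V \<and> (\<forall>x \<in> S. \<exists>F. private_fort V E S x F)"

definition maximal_ZIr_set :: "'a set \<Rightarrow> ('a \<Rightarrow> 'a \<Rightarrow> bool) \<Rightarrow> 'a set \<Rightarrow> bool" where
  "maximal_ZIr_set V E S \<longleftrightarrow> ZIr_set V E S \<and> (\<forall>T. ZIr_set V E T \<and> S \<subseteq> T \<longrightarrow> T = S)"

definition zir :: "'a set \<Rightarrow> ('a \<Rightarrow> 'a \<Rightarrow> bool) \<Rightarrow> nat" where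
  "zir V E = Min (card ` {S. maximal_ZIr_set V E S})"

definition graph_iso :: "'a set \<Rightarrow> ('a \<Rightarrow> 'a \<Rightarrow> bool) \<Rightarrow> 'b set \<Rightarrow> ('b \<Rightarrow> 'b \<Rightarrow> bool) \<Rightarrow> bool" where
  "graph_iso V E W E' \<longleftrightarrow> (\<exists>f. bij_betw f V W \<and> (\<forall>u \<in> V. \<forall>v \<in> V. E u v \<longleftrightarrow> E' (f u) (f v)))"

definition path_edge :: "nat \<Rightarrow> nat \<Rightarrow> nat \<Rightarrow> bool" where
  "path_edge n i j \<longleftrightarrow> i < n \<and> j < n \<and> (j = Suc i \<or> i = Suc j)"

definition star_edge :: "nat \<Rightarrow> nat \<Rightarrow> nat \<Rightarrow> bool" where
  "star_edge n i j \<longleftrightarrow> i < n \<and> j < n \<and> i \<noteq> j \<and> (i = 0 \<or> j = 0)"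

end

theory Submission
  imports Defs
begin

text \<open>
  The singleton {x} is a maximal ZIr-set exactly when no vertex y can be separated from x by
  two forts, one containing x but not y and one containing y but not x.  So zir = 1 means that
  some vertex x cannot be separated from any other vertex in this way.

  In the path, the endpoint 0 lies in every fort: the vertex just below the least element of a
  fort avoiding 0 would have exactly one neighbour in it.  In the star, every fort containing
  the centre is everything.  Either way the endpoint (the centre) is not separable.

  Conversely, deleting a vertex of degree other than 1, or a union of components, leaves a fort.
  Hence a non-separable x meets every component, and every vertex of a fort avoiding x is a leaf.
  If x is not a leaf, V - {x} is such a fort, so all other vertices are leaves attached to x,
  and G is a star.  If x is a leaf, a fort avoiding x leads to a contradiction, so x lies in
  every fort; this property passes to the neighbour of x in G - x, and induction shows that G
  is a path ending in x.
\<close>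

lemma nbhd_sym: "graph V E \<Longrightarrow> u \<in> nbhd V E v \<longleftrightarrow> v \<in> nbhd V E u"
  by (auto simp: graph_def nbhd_def)

lemma not_in_nbhd_self: "graph V E \<Longrightarrow> v \<notin> nbhd V E v"
  by (simp add: graph_def nbhd_def)

lemma finite_nbhd: "graph V E \<Longrightarrow> finite (nbhd V E v)"
  by (simp add: graph_def nbhd_def)

lemma is_fort_self: "V \<noteq> {} \<Longrightarrow> is_fort V E V"
  by (auto simp: is_fort_def)

lemma is_fort_no_single_neighbour:
  assumes "is_fort V E F" "v \<in> V" "v \<notin> F"
  shows "nbhd V E v \<inter> F \<noteq> {z}"
proof
  assume "nbhd V E v \<inter> F = {z}"
  then have "card (nbhd V E v \<inter> F) = 1"
    by simp
  then show False
    using assms by (auto simp: is_fort_def)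
qed

lemma is_fort_Diff:
  assumes "S \<subseteq> V" "V - S \<noteq> {}" "\<forall>v\<in>S. card (nbhd V E v - S) \<noteq> 1"
  shows "is_fort V E (V - S)"
proof -
  have "nbhd V E v \<inter> (V - S) = nbhd V E v - S" for v
    by (auto simp: nbhd_def)
  then show ?thesis
    using assms by (auto simp: is_fort_def)
qed

lemma is_fort_Diff_singleton:
  assumes "graph V E" "x \<in> V" "V \<noteq> {x}" "card (nbhd V E x) \<noteq> 1"
  shows "is_fort V E (V - {x})"
proof (rule is_fort_Diff)
  have "x \<notin> nbhd V E x"
    using not_in_nbhd_self[OF assms(1)] .
  then show "\<forall>v\<in>{x}. card (nbhd V E v - {x}) \<noteq> 1"
    using assms(4) by simp
qed (use assms(2,3) in auto)

lemma is_fort_Diff_closed: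
  assumes "C \<subseteq> V" "V - C \<noteq> {}" "\<forall>v\<in>C. nbhd V E v \<subseteq> C"
  shows "is_fort V E (V - C)"
proof (rule is_fort_Diff)
  show "\<forall>v\<in>C. card (nbhd V E v - C) \<noteq> 1"
    using assms(3) by (metis Diff_eq_empty_iff card.empty zero_neq_one)
qed (use assms(1,2) in auto)

lemma is_fort_closed:
  assumes "graph V E" "C \<subseteq> V" "C \<noteq> {}" "\<forall>v\<in>C. nbhd V E v \<subseteq> C"
  shows "is_fort V E C"
proof -
  have "nbhd V E v \<inter> C = {}" if "v \<in> V - C" for v
  proof -
    have "v \<notin> nbhd V E u" if "u \<in> C" for u
      using assms(4) that \<open>v \<in> V - C\<close> by blast
    then show ?thesis
      using nbhd_sym[OF assms(1)] by blast
  qed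
  then show ?thesis
    using assms(2,3) by (auto simp: is_fort_def)
qed

lemma ZIr_set_singleton: "x \<in> V \<Longrightarrow> ZIr_set V E {x}"
  unfolding ZIr_set_def private_fort_def by (auto intro!: exI[of _ V] is_fort_self)

lemma maximal_ZIr_set_subset: "maximal_ZIr_set V E S \<Longrightarrow> S \<subseteq> V"
  by (simp add: maximal_ZIr_set_def ZIr_set_def)

lemma maximal_ZIr_singletonI:
  assumes "x \<in> V"
    and no_separation: "\<And>y A B. y \<in> V \<Longrightarrow> y \<noteq> x \<Longrightarrow> is_fort V E A \<Longrightarrow> is_fort V E B \<Longrightarrow>
      x \<in> A \<Longrightarrow> y \<in> B \<Longrightarrow> y \<in> A \<or> x \<in> B"
  shows "maximal_ZIr_set V E {x}"
proof -
  have "T = {x}" if T: "ZIr_set V E T" "{x} \<subseteq> T" for T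
  proof (rule ccontr)
    assume "T \<noteq> {x}"
    then obtain y where y: "y \<in> T" "y \<noteq> x"
      using T(2) by blast
    have "x \<in> T"
      using T(2) by blast
    obtain A where A: "is_fort V E A" "T \<inter> A = {x}"
      using T(1) \<open>x \<in> T\<close> unfolding ZIr_set_def private_fort_def by blast
    obtain B where B: "is_fort V E B" "T \<inter> B = {y}"
      using T(1) \<open>y \<in> T\<close> unfolding ZIr_set_def private_fort_def by blast
    have "y \<in> V"
      using T(1) y unfolding ZIr_set_def by auto
    moreover have "x \<in> A" "y \<notin> A"
      using A(2) y \<open>x \<in> T\<close> by (blast, metis IntI singletonD)
    moreover have "y \<in> B" "x \<notin> B"
      using B(2) y \<open>x \<in> T\<close> by (blast, metis IntI singletonD)
    ultimately show False
      using no_separation[OF _ y(2) A(1) B(1)] by blast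
  qed
  then show ?thesis
    using ZIr_set_singleton[OF assms(1)] unfolding maximal_ZIr_set_def by blast
qed

lemma maximal_ZIr_singleton_separatedE:
  assumes max: "maximal_ZIr_set V E {x}" and "y \<in> V" "y \<noteq> x"
    and A: "is_fort V E A" "x \<in> A" "y \<notin> A" and B: "is_fort V E B" "y \<in> B" "x \<notin> B"
  shows False
proof -
  have "x \<in> V"
    using maximal_ZIr_set_subset[OF max] by simp
  have "private_fort V E {x, y} x A" "private_fort V E {x, y} y B"
    using A B unfolding private_fort_def by auto
  then have "\<forall>z\<in>{x, y}. \<exists>F. private_fort V E {x, y} z F"
    by blast
  then have "ZIr_set V E {x, y}"
    unfolding ZIr_set_def using \<open>x \<in> V\<close> \<open>y \<in> V\<close> by simp
  then have "{x, y} = {x}"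
    using max unfolding maximal_ZIr_set_def by blast
  then show False
    using \<open>y \<noteq> x\<close> by (metis insertI1 insert_commute singletonD)
qed

lemma ex_maximal_ZIr_set:
  assumes "finite V"
  shows "\<exists>S. maximal_ZIr_set V E S"
proof -
  have "finite {S. ZIr_set V E S}"
    by (rule finite_subset[of _ "Pow V"]) (use assms in \<open>auto simp: ZIr_set_def\<close>)
  moreover have "{} \<in> {S. ZIr_set V E S}"
    by (simp add: ZIr_set_def)
  ultimately obtain S where "S \<in> {S. ZIr_set V E S}" "\<forall>T\<in>{S. ZIr_set V E S}. S \<subseteq> T \<longrightarrow> S = T"
    using finite_has_maximal by blast
  then show ?thesis
    unfolding maximal_ZIr_set_def by auto
qed

lemma maximal_ZIr_set_nonempty:
  assumes "maximal_ZIr_set V E S" "V \<noteq> {}"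
  shows "S \<noteq> {}"
proof
  assume "S = {}"
  obtain v where "v \<in> V"
    using assms(2) by blast
  then have "{v} = S"
    using assms(1) ZIr_set_singleton[of v V E] \<open>S = {}\<close> unfolding maximal_ZIr_set_def
    by (metis empty_subsetI)
  then show False
    using \<open>S = {}\<close> by simp
qed

lemma zir_eq_1_iff:
  assumes "finite V" "V \<noteq> {}"
  shows "zir V E = 1 \<longleftrightarrow> (\<exists>x. maximal_ZIr_set V E {x})"
proof -
  let ?cards = "card ` {S. maximal_ZIr_set V E S}"
  have fin_max: "finite {S. maximal_ZIr_set V E S}"
    by (rule finite_subset[of _ "Pow V"]) (use assms(1) in \<open>auto simp: maximal_ZIr_set_def ZIr_set_def\<close>)
  have ne: "?cards \<noteq> {}"
    using ex_maximal_ZIr_set[OF assms(1)] by blast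
  have pos: "1 \<le> k" if k: "k \<in> ?cards" for k
  proof -
    obtain S where "maximal_ZIr_set V E S" "k = card S"
      using k by blast
    moreover have "finite S"
      using finite_subset[OF maximal_ZIr_set_subset[OF \<open>maximal_ZIr_set V E S\<close>] assms(1)] .
    ultimately show ?thesis
      using maximal_ZIr_set_nonempty[OF _ assms(2)] by (simp add: Suc_le_eq card_gt_0_iff)
  qed
  have "zir V E = 1 \<longleftrightarrow> 1 \<in> ?cards"
  proof
    assume "zir V E = 1"
    then show "1 \<in> ?cards"
      using Min_in[OF finite_imageI[OF fin_max] ne] unfolding zir_def by simp
  next
    assume "1 \<in> ?cards"
    then show "zir V E = 1"
      unfolding zir_def using pos by (intro Min_eqI finite_imageI[OF fin_max]) auto
  qed
  also have "\<dots> \<longleftrightarrow> (\<exists>x. maximal_ZIr_set V E {x})"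
  proof
    assume "1 \<in> ?cards"
    then obtain S where "maximal_ZIr_set V E S" "card S = 1"
      by auto
    moreover from \<open>card S = 1\<close> obtain x where "S = {x}"
      by (rule card_1_singletonE)
    ultimately show "\<exists>x. maximal_ZIr_set V E {x}"
      by blast
  next
    assume "\<exists>x. maximal_ZIr_set V E {x}"
    then obtain x where "maximal_ZIr_set V E {x}" ..
    then show "1 \<in> ?cards"
      by (intro image_eqI[of _ _ "{x}"]) auto
  qed
  finally show ?thesis .
qed

lemma maximal_ZIr_singleton_in_closed:
  assumes "graph V E" "maximal_ZIr_set V E {x}"
    and "C \<subseteq> V" "C \<noteq> {}" "\<forall>v\<in>C. nbhd V E v \<subseteq> C"
  shows "x \<in> C"
proof (rule ccontr)
  assume "x \<notin> C"
  obtain y where "y \<in> C"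
    using assms(4) by blast
  have "x \<in> V"
    using maximal_ZIr_set_subset[OF assms(2)] by simp
  have "is_fort V E (V - C)"
    using is_fort_Diff_closed[OF assms(3) _ assms(5)] \<open>x \<in> V\<close> \<open>x \<notin> C\<close> by blast
  moreover have "is_fort V E C"
    using is_fort_closed[OF assms(1,3,4,5)] .
  ultimately show False
    using maximal_ZIr_singleton_separatedE[OF assms(2), of y "V - C" C]
      \<open>x \<in> V\<close> \<open>x \<notin> C\<close> \<open>y \<in> C\<close> assms(3) by blast
qed

lemma maximal_ZIr_singleton_fort_degree_one:
  assumes "graph V E" "maximal_ZIr_set V E {x}" "is_fort V E F" "x \<notin> F" "z \<in> F"
  shows "card (nbhd V E z) = 1"
proof (rule ccontr)
  assume "card (nbhd V E z) \<noteq> 1"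
  have "x \<in> V"
    using maximal_ZIr_set_subset[OF assms(2)] by simp
  have "z \<in> V" "z \<noteq> x"
    using assms(3-5) by (auto simp: is_fort_def)
  then have "is_fort V E (V - {z})"
    using is_fort_Diff_singleton[OF assms(1)] \<open>card (nbhd V E z) \<noteq> 1\<close> \<open>x \<in> V\<close> by blast
  then show False
    using maximal_ZIr_singleton_separatedE[OF assms(2) \<open>z \<in> V\<close> \<open>z \<noteq> x\<close> _ _ _ assms(3,5,4)]
      \<open>x \<in> V\<close> \<open>z \<noteq> x\<close> by blast
qed

lemma maximal_ZIr_singleton_star_centre:
  assumes "graph V E" "maximal_ZIr_set V E {x}" "card (nbhd V E x) \<noteq> 1" "y \<in> V" "y \<noteq> x"
  shows "nbhd V E y = {x}"
proof -
  have "x \<in> V"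
    using maximal_ZIr_set_subset[OF assms(2)] by simp
  then have "is_fort V E (V - {x})"
    using is_fort_Diff_singleton[OF assms(1)] assms(3-5) by blast
  then have degree_one: "card (nbhd V E z) = 1" if "z \<in> V" "z \<noteq> x" for z
    using maximal_ZIr_singleton_fort_degree_one[OF assms(1,2)] that by blast
  obtain u where u: "nbhd V E y = {u}"
    using degree_one[OF assms(4,5)] by (rule card_1_singletonE)
  show ?thesis
  proof (rule ccontr)
    assume "nbhd V E y \<noteq> {x}"
    then have "u \<noteq> x"
      using u by simp
    have "u \<in> V" "y \<in> nbhd V E u"
      using u nbhd_sym[OF assms(1)] by (auto simp: nbhd_def)
    then have "nbhd V E u = {y}"
      using degree_one[OF _ \<open>u \<noteq> x\<close>] by (metis card_1_singletonE singletonD)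
    then have "x \<in> {y, u}"
      using maximal_ZIr_singleton_in_closed[OF assms(1,2), of "{y, u}"] u \<open>u \<in> V\<close> assms(4)
      by auto
    then show False
      using assms(5) \<open>u \<noteq> x\<close> by blast
  qed
qed

lemma maximal_ZIr_singleton_fort_neighbour_degree_two:
  assumes "graph V E" "maximal_ZIr_set V E {x}" "is_fort V E F" "x \<notin> F"
    and "y \<in> F" "nbhd V E y = {u}" "u \<noteq> x"
  shows "card (nbhd V E u) = 2"
proof (rule ccontr)
  assume "card (nbhd V E u) \<noteq> 2"
  have "x \<in> V"
    using maximal_ZIr_set_subset[OF assms(2)] by simp
  have "y \<in> V" "y \<noteq> x"
    using assms(3-5) by (auto simp: is_fort_def)
  have "u \<in> V" "y \<in> nbhd V E u"
    using assms(6) nbhd_sym[OF assms(1)] by (auto simp: nbhd_def)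
  have "nbhd V E u - {y, u} = nbhd V E u - {y}"
    using not_in_nbhd_self[OF assms(1)] by blast
  then have "card (nbhd V E u - {y, u}) \<noteq> 1"
    using \<open>card (nbhd V E u) \<noteq> 2\<close> \<open>y \<in> nbhd V E u\<close> finite_nbhd[OF assms(1)]
    by (metis card_Diff_singleton card.remove nat.inject numeral_2_eq_2 One_nat_def)
  then have "is_fort V E (V - {y, u})"
    using assms(6,7) \<open>u \<in> V\<close> \<open>y \<in> V\<close> \<open>x \<in> V\<close> \<open>y \<noteq> x\<close> by (intro is_fort_Diff) auto
  then show False
    using maximal_ZIr_singleton_separatedE[OF assms(2) \<open>y \<in> V\<close> \<open>y \<noteq> x\<close> _ _ _ assms(3,5,4)]
      \<open>x \<in> V\<close> assms(7) \<open>y \<noteq> x\<close> by blast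
qed

\<comment> \<open>A vertex y of a fort avoiding x is a leaf whose neighbour u has degree 2; the other
  neighbour of u is again a leaf, so the three vertices form a component not containing x.\<close>
lemma maximal_ZIr_singleton_leaf_in_forts:
  assumes "graph V E" "maximal_ZIr_set V E {x}" "card (nbhd V E x) = 1" "is_fort V E F"
  shows "x \<in> F"
proof (rule ccontr)
  assume "x \<notin> F"
  have "x \<in> V"
    using maximal_ZIr_set_subset[OF assms(2)] by simp
  have degree_one: "card (nbhd V E z) = 1" if "z \<in> F" for z
    using maximal_ZIr_singleton_fort_degree_one[OF assms(1,2,4) \<open>x \<notin> F\<close> that] .
  obtain y where "y \<in> F"
    using assms(4) by (auto simp: is_fort_def)
  then have "y \<in> V" "y \<noteq> x"
    using assms(4) \<open>x \<notin> F\<close> by (auto simp: is_fort_def)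
  obtain u where u: "nbhd V E y = {u}"
    using degree_one[OF \<open>y \<in> F\<close>] by (rule card_1_singletonE)
  have "u \<in> V" "y \<in> nbhd V E u"
    using u nbhd_sym[OF assms(1)] by (auto simp: nbhd_def)
  have "u \<noteq> x"
  proof
    assume "u = x"
    then have "nbhd V E x \<inter> F = {y}"
      using assms(3) \<open>y \<in> nbhd V E u\<close> \<open>y \<in> F\<close>
      by (metis card_1_singletonE Int_insert_left_if1 inf_bot_left singletonD)
    then show False
      using is_fort_no_single_neighbour[OF assms(4) \<open>x \<in> V\<close> \<open>x \<notin> F\<close>] by blast
  qed
  have "card (nbhd V E u) = 2"
    using maximal_ZIr_singleton_fort_neighbour_degree_two[OF assms(1,2,4) \<open>x \<notin> F\<close> \<open>y \<in> F\<close> u \<open>u \<noteq> x\<close>] .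
  then obtain z where z: "nbhd V E u = {y, z}"
    using \<open>y \<in> nbhd V E u\<close> by (metis card_2_iff insert_commute insertE singletonD)
  have "u \<notin> F"
    using degree_one \<open>card (nbhd V E u) = 2\<close> by fastforce
  then have "z \<in> F"
    using is_fort_no_single_neighbour[OF assms(4) \<open>u \<in> V\<close>, of y] z \<open>y \<in> F\<close> by auto
  have "nbhd V E z = {u}"
    using degree_one[OF \<open>z \<in> F\<close>] z nbhd_sym[OF assms(1), of u z]
    by (metis card_1_singletonE insertI1 insert_commute singletonD)
  then have "x \<in> {y, u, z}"
    using maximal_ZIr_singleton_in_closed[OF assms(1,2), of "{y, u, z}"] u z \<open>u \<in> V\<close> \<open>y \<in> V\<close>
    by (auto simp: nbhd_def)
  then show False
    using \<open>y \<noteq> x\<close> \<open>u \<noteq> x\<close> \<open>z \<in> F\<close> \<open>x \<notin> F\<close> by blast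
qed

lemma bij_betw_fun_upd_insert:
  assumes "bij_betw f A B" "a \<notin> A" "b \<notin> B"
  shows "bij_betw (f(a := b)) (insert a A) (insert b B)"
proof -
  have "bij_betw (f(a := b)) A B"
    using assms(1,2) by (metis bij_betw_cong fun_upd_other)
  then show ?thesis
    using notIn_Un_bij_betw[of a A "f(a := b)" B] assms(2,3) by simp
qed

lemma is_fort_delete_leaf:
  assumes "nbhd V E x = {w}" "is_fort (V - {x}) (\<lambda>u v. E u v \<and> u \<noteq> x \<and> v \<noteq> x) F" "w \<notin> F"
  shows "is_fort V E F"
  unfolding is_fort_def
proof (intro conjI ballI)
  show "F \<noteq> {}" "F \<subseteq> V"
    using assms(2) by (auto simp: is_fort_def)
  fix v
  assume v: "v \<in> V - F"
  show "card (nbhd V E v \<inter> F) \<noteq> 1"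
  proof (cases "v = x")
    case True
    then show ?thesis
      using assms(1,3) by simp
  next
    case False
    have "nbhd V E v \<inter> F = nbhd (V - {x}) (\<lambda>u v. E u v \<and> u \<noteq> x \<and> v \<noteq> x) v \<inter> F"
      using False assms(2) by (auto simp: nbhd_def is_fort_def)
    then show ?thesis
      using False v assms(2) unfolding is_fort_def by auto
  qed
qed

lemma path_iso_add_leaf:
  assumes g: "bij_betw g (V - {x}) {0..<k}"
    and g_edge: "\<forall>u\<in>V - {x}. \<forall>v\<in>V - {x}. E u v \<longleftrightarrow> path_edge k (g u) (g v)"
    and "x \<in> V" "w \<in> V - {x}" "g w = k - 1"
    and x_edge: "\<forall>v\<in>V. E x v \<longleftrightarrow> v = w" "\<forall>v\<in>V. E v x \<longleftrightarrow> v = w"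
  defines "f \<equiv> g(x := k)"
  shows "bij_betw f V {0..<Suc k}" "\<forall>u\<in>V. \<forall>v\<in>V. E u v \<longleftrightarrow> path_edge (Suc k) (f u) (f v)"
proof -
  show "bij_betw f V {0..<Suc k}"
    using bij_betw_fun_upd_insert[OF g, of x k] \<open>x \<in> V\<close> unfolding f_def
    by (simp add: insert_absorb atLeast0_lessThan_Suc)
  have g_lt: "g v < k" if "v \<in> V - {x}" for v
    using g that by (auto simp: bij_betw_def)
  have leaf_edge: "path_edge (Suc k) k (g v) \<longleftrightarrow> v = w" "path_edge (Suc k) (g v) k \<longleftrightarrow> v = w"
    if "v \<in> V - {x}" for v
  proof -
    have "g v = k - 1 \<longleftrightarrow> v = w"
      using g that \<open>w \<in> V - {x}\<close> \<open>g w = k - 1\<close> by (metis bij_betw_iff_bijections)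
    then show "path_edge (Suc k) k (g v) \<longleftrightarrow> v = w" "path_edge (Suc k) (g v) k \<longleftrightarrow> v = w"
      using g_lt[OF that] by (auto simp: path_edge_def)
  qed
  show "\<forall>u\<in>V. \<forall>v\<in>V. E u v \<longleftrightarrow> path_edge (Suc k) (f u) (f v)"
  proof (intro ballI)
    fix u v
    assume "u \<in> V" "v \<in> V"
    consider "u = x" "v = x" | "u = x" "v \<noteq> x" | "u \<noteq> x" "v = x" | "u \<noteq> x" "v \<noteq> x"
      by blast
    then show "E u v \<longleftrightarrow> path_edge (Suc k) (f u) (f v)"
    proof cases
      case 1
      then show ?thesis
        using x_edge \<open>w \<in> V - {x}\<close> \<open>u \<in> V\<close> by (auto simp: f_def path_edge_def)
    next
      case 2
      then show ?thesis
        using x_edge(1) leaf_edge(1) \<open>v \<in> V\<close> by (simp add: f_def)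
    next
      case 3
      then show ?thesis
        using x_edge(2) leaf_edge(2) \<open>u \<in> V\<close> by (simp add: f_def)
    next
      case 4
      then show ?thesis
        using g_edge g_lt[of u] g_lt[of v] \<open>u \<in> V\<close> \<open>v \<in> V\<close> by (auto simp: f_def path_edge_def)
    qed
  qed
qed

lemma path_iso_if_in_all_forts:
  assumes "graph V E" "card V = n" "x \<in> V" "\<forall>F. is_fort V E F \<longrightarrow> x \<in> F"
  shows "\<exists>f. bij_betw f V {0..<n} \<and> (\<forall>u\<in>V. \<forall>v\<in>V. E u v \<longleftrightarrow> path_edge n (f u) (f v)) \<and> f x = n - 1"
  using assms
proof (induction n arbitrary: V E x)
  case 0
  then show ?case
    by (simp add: graph_def)
next
  case (Suc k)
  have "finite V"
    using Suc.prems(1) by (simp add: graph_def)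
  show ?case
  proof (cases "V = {x}")
    case True
    then have "bij_betw (\<lambda>_. 0) V {0..<Suc k}" "k = 0"
      using Suc.prems(2) by (simp_all add: bij_betw_def)
    moreover have "\<not> E x x"
      using Suc.prems(1) by (simp add: graph_def)
    ultimately show ?thesis
      using True by (intro exI[of _ "\<lambda>_. 0"]) (simp add: path_edge_def)
  next
    case False
    have "card (nbhd V E x) = 1"
      using is_fort_Diff_singleton[OF Suc.prems(1,3) False] Suc.prems(4) by blast
    then obtain w where w: "nbhd V E x = {w}"
      by (rule card_1_singletonE)
    define E' where "E' = (\<lambda>u v. E u v \<and> u \<noteq> x \<and> v \<noteq> x)"
    have "graph (V - {x}) E'"
      using Suc.prems(1) by (auto simp: graph_def E'_def)
    moreover have "card (V - {x}) = k"
      using Suc.prems(2,3) \<open>finite V\<close> by simp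
    moreover have "w \<in> V - {x}"
      using w not_in_nbhd_self[OF Suc.prems(1), of x] by (auto simp: nbhd_def)
    moreover have "w \<in> F" if "is_fort (V - {x}) E' F" for F
    proof (rule ccontr)
      assume "w \<notin> F"
      then have "x \<in> F"
        using is_fort_delete_leaf[OF w] that Suc.prems(4) unfolding E'_def by blast
      then show False
        using that by (auto simp: is_fort_def)
    qed
    ultimately obtain g where g: "bij_betw g (V - {x}) {0..<k}"
      "\<forall>u\<in>V - {x}. \<forall>v\<in>V - {x}. E' u v \<longleftrightarrow> path_edge k (g u) (g v)" "g w = k - 1"
      using Suc.IH by blast
    have g_edge: "\<forall>u\<in>V - {x}. \<forall>v\<in>V - {x}. E u v \<longleftrightarrow> path_edge k (g u) (g v)"
      using g(2) by (simp add: E'_def)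
    have "\<forall>v\<in>V. E x v \<longleftrightarrow> v = w" "\<forall>v\<in>V. E v x \<longleftrightarrow> v = w"
      using w nbhd_sym[OF Suc.prems(1), of _ x] by (auto simp: nbhd_def)
    note f = path_iso_add_leaf[OF g(1) g_edge Suc.prems(3) \<open>w \<in> V - {x}\<close> g(3) this]
    have "(g(x := k)) x = Suc k - 1"
      by simp
    with f show ?thesis
      by blast
  qed
qed

lemma star_iso_if_centre:
  assumes "graph V E" "card V = n" "x \<in> V" "\<forall>y\<in>V - {x}. nbhd V E y = {x}"
  shows "graph_iso V E {0..<n} (star_edge n)"
proof -
  have "finite V"
    using assms(1) by (simp add: graph_def)
  then have "n \<ge> 1"
    using assms(2,3) by (metis One_nat_def Suc_leI card_gt_0_iff empty_iff)
  obtain h where h: "bij_betw h (V - {x}) {0..<n - 1}"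
    using ex_bij_betw_finite_nat[of "V - {x}"] \<open>finite V\<close> assms(2,3) by auto
  define f where "f = (Suc \<circ> h)(x := 0)"
  have "bij_betw Suc {0..<n - 1} {1..<n}"
    using \<open>n \<ge> 1\<close> by (simp add: image_Suc_atLeastLessThan)
  with h have "bij_betw (Suc \<circ> h) (V - {x}) {1..<n}"
    by (rule bij_betw_trans)
  moreover have "insert x (V - {x}) = V" "insert 0 {1..<n} = {0..<n}"
    using assms(3) \<open>n \<ge> 1\<close> by auto
  ultimately have f_bij: "bij_betw f V {0..<n}"
    using bij_betw_fun_upd_insert[of "Suc \<circ> h" "V - {x}" "{1..<n}" x 0] by (simp add: f_def)
  have f_zero: "f v = 0 \<longleftrightarrow> v = x" for v
    by (simp add: f_def)
  have f_eq: "f u = f v \<longleftrightarrow> u = v" if "u \<in> V" "v \<in> V" for u v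
    using f_bij that by (metis bij_betw_iff_bijections)
  have f_lt: "f v < n" if "v \<in> V" for v
    using f_bij that by (auto simp: bij_betw_def)
  have E_star: "E u v \<longleftrightarrow> u \<noteq> v \<and> (u = x \<or> v = x)" if "u \<in> V" "v \<in> V" for u v
    using assms(4) that nbhd_sym[OF assms(1), of u x] nbhd_sym[OF assms(1), of v x]
      not_in_nbhd_self[OF assms(1), of x]
    by (auto simp: nbhd_def)
  have "E u v \<longleftrightarrow> star_edge n (f u) (f v)" if "u \<in> V" "v \<in> V" for u v
    using E_star[OF that] f_eq[OF that] f_zero[of u] f_zero[of v] f_lt[OF that(1)] f_lt[OF that(2)]
    by (auto simp: star_edge_def)
  then show ?thesis
    unfolding graph_iso_def using f_bij by blast
qed

lemma is_fort_image:
  assumes f: "bij_betw f V W" and f_edge: "\<forall>u\<in>V. \<forall>v\<in>V. E u v \<longleftrightarrow> E' (f u) (f v)"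
    and F: "is_fort V E F"
  shows "is_fort W E' (f ` F)"
proof -
  have "F \<subseteq> V" "F \<noteq> {}"
    using F by (auto simp: is_fort_def)
  have W: "W = f ` V" and inj: "inj_on f V"
    using f by (auto simp: bij_betw_def)
  have nbhd_image: "nbhd W E' (f v) \<inter> f ` F = f ` (nbhd V E v \<inter> F)" if "v \<in> V" for v
    using that f_edge \<open>F \<subseteq> V\<close> unfolding W nbhd_def by auto
  have "card (nbhd W E' w \<inter> f ` F) \<noteq> 1" if w: "w \<in> W - f ` F" for w
  proof -
    obtain v where "v \<in> V" "w = f v"
      using w W by blast
    then have "v \<notin> F"
      using w by blast
    have "inj_on f (nbhd V E v \<inter> F)"
      using inj_on_subset[OF inj] \<open>F \<subseteq> V\<close> by blast
    then have "card (nbhd W E' w \<inter> f ` F) = card (nbhd V E v \<inter> F)"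
      using nbhd_image[OF \<open>v \<in> V\<close>] \<open>w = f v\<close> by (simp add: card_image)
    then show ?thesis
      using F \<open>v \<in> V\<close> \<open>v \<notin> F\<close> by (simp add: is_fort_def)
  qed
  then show ?thesis
    using \<open>F \<subseteq> V\<close> \<open>F \<noteq> {}\<close> W unfolding is_fort_def by blast
qed

lemma zero_in_path_fort:
  assumes F: "is_fort {0..<n} (path_edge n) F"
  shows "0 \<in> F"
proof (rule ccontr)
  assume "0 \<notin> F"
  have "finite F" "F \<noteq> {}" "F \<subseteq> {0..<n}"
    using F by (auto simp: is_fort_def intro: finite_subset)
  define m where "m = Min F"
  have "m \<in> F" "\<forall>i\<in>F. m \<le> i"
    using \<open>finite F\<close> \<open>F \<noteq> {}\<close> by (simp_all add: m_def)
  then have "0 < m" "m < n"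
    using \<open>0 \<notin> F\<close> \<open>F \<subseteq> {0..<n}\<close> by (metis gr0I, auto)
  have "nbhd {0..<n} (path_edge n) (m - 1) \<inter> F = {m}"
    using \<open>m \<in> F\<close> \<open>\<forall>i\<in>F. m \<le> i\<close> \<open>0 < m\<close> \<open>m < n\<close> \<open>F \<subseteq> {0..<n}\<close>
    by (auto simp: nbhd_def path_edge_def)
  moreover have "m - 1 \<notin> F"
    using \<open>\<forall>i\<in>F. m \<le> i\<close> \<open>0 < m\<close> by fastforce
  ultimately show False
    using is_fort_no_single_neighbour[OF F, of "m - 1" m] \<open>m < n\<close> by (simp add: less_imp_diff_less)
qed

lemma star_fort_eq_if_zero_in:
  assumes F: "is_fort {0..<n} (star_edge n) F" and "0 \<in> F"
  shows "F = {0..<n}"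
proof (rule ccontr)
  assume "F \<noteq> {0..<n}"
  then obtain i where "i < n" "i \<notin> F"
    using F by (auto simp: is_fort_def)
  moreover have "i \<noteq> 0"
    using \<open>0 \<in> F\<close> \<open>i \<notin> F\<close> by metis
  ultimately have "nbhd {0..<n} (star_edge n) i \<inter> F = {0}"
    using \<open>0 \<in> F\<close> by (auto simp: nbhd_def star_edge_def)
  then show False
    using is_fort_no_single_neighbour[OF F, of i] \<open>i < n\<close> \<open>i \<notin> F\<close> by simp
qed

lemma graph_iso_zeroE:
  fixes n :: nat
  assumes "graph_iso V E {0..<n} E'" "n \<ge> 1"
  obtains f x where "bij_betw f V {0..<n}" "\<forall>u\<in>V. \<forall>v\<in>V. E u v \<longleftrightarrow> E' (f u) (f v)"
    "x \<in> V" "f x = 0"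
proof -
  obtain f where f: "bij_betw f V {0..<n}" "\<forall>u\<in>V. \<forall>v\<in>V. E u v \<longleftrightarrow> E' (f u) (f v)"
    using assms(1) unfolding graph_iso_def by blast
  moreover have "0 \<in> f ` V"
    using f(1) assms(2) by (auto simp: bij_betw_def)
  then obtain x where "x \<in> V" "f x = 0"
    by (metis imageE)
  ultimately show ?thesis
    using that by blast
qed

lemma maximal_ZIr_singleton_if_path_iso:
  assumes "graph_iso V E {0..<n} (path_edge n)" "n \<ge> 1"
  shows "\<exists>x. maximal_ZIr_set V E {x}"
proof -
  obtain f x where f: "bij_betw f V {0..<n}" "\<forall>u\<in>V. \<forall>v\<in>V. E u v \<longleftrightarrow> path_edge n (f u) (f v)"
    and "x \<in> V" "f x = 0"
    using graph_iso_zeroE[OF assms] .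
  have "x \<in> F" if "is_fort V E F" for F
  proof -
    have "0 \<in> f ` F"
      using zero_in_path_fort[OF is_fort_image[OF f that]] .
    then obtain y where "y \<in> F" "f y = f x"
      using \<open>f x = 0\<close> by auto
    moreover have "y \<in> V"
      using that \<open>y \<in> F\<close> by (auto simp: is_fort_def)
    ultimately show ?thesis
      using f(1) \<open>x \<in> V\<close> by (metis bij_betw_def inj_onD)
  qed
  then show ?thesis
    using maximal_ZIr_singletonI[OF \<open>x \<in> V\<close>] by blast
qed

lemma maximal_ZIr_singleton_if_star_iso:
  assumes "graph_iso V E {0..<n} (star_edge n)" "n \<ge> 1"
  shows "\<exists>x. maximal_ZIr_set V E {x}"
proof -
  obtain f x where f: "bij_betw f V {0..<n}" "\<forall>u\<in>V. \<forall>v\<in>V. E u v \<longleftrightarrow> star_edge n (f u) (f v)"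
    and "x \<in> V" "f x = 0"
    using graph_iso_zeroE[OF assms] .
  have "F = V" if "is_fort V E F" "x \<in> F" for F
  proof -
    have "f ` F = f ` V"
      using star_fort_eq_if_zero_in[OF is_fort_image[OF f that(1)]] that(2) \<open>f x = 0\<close> f(1)
      by (auto simp: bij_betw_def)
    moreover have "F \<subseteq> V" "inj_on f V"
      using that(1) f(1) by (auto simp: is_fort_def bij_betw_def)
    ultimately show ?thesis
      using inj_on_image_eq_iff by blast
  qed
  then show ?thesis
    using maximal_ZIr_singletonI[OF \<open>x \<in> V\<close>] by blast
qed

lemma maximal_ZIr_singleton_path_or_star:
  assumes "graph V E" "card V = n" "maximal_ZIr_set V E {x}"
  shows "graph_iso V E {0..<n} (path_edge n) \<or> graph_iso V E {0..<n} (star_edge n)"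
proof (cases "card (nbhd V E x) = 1")
  case True
  then have "\<forall>F. is_fort V E F \<longrightarrow> x \<in> F"
    using maximal_ZIr_singleton_leaf_in_forts[OF assms(1,3)] by blast
  then show ?thesis
    using path_iso_if_in_all_forts[OF assms(1,2)] maximal_ZIr_set_subset[OF assms(3)]
    unfolding graph_iso_def by blast
next
  case False
  then have "\<forall>y\<in>V - {x}. nbhd V E y = {x}"
    using maximal_ZIr_singleton_star_centre[OF assms(1,3)] by blast
  then show ?thesis
    using star_iso_if_centre[OF assms(1,2)] maximal_ZIr_set_subset[OF assms(3)] by blast
qed

theorem theorem5p8:
  fixes V :: "'a set" and E :: "'a \<Rightarrow> 'a \<Rightarrow> bool" and n :: nat
  assumes "graph V E" and "card V = n" and "n \<ge> 1"
  shows "zir V E = 1 \<longleftrightarrow>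
           graph_iso V E {0..<n} (path_edge n) \<or> graph_iso V E {0..<n} (star_edge n)"
proof -
  have "finite V" "V \<noteq> {}"
    using assms by (auto simp: graph_def)
  then have "zir V E = 1 \<longleftrightarrow> (\<exists>x. maximal_ZIr_set V E {x})"
    by (rule zir_eq_1_iff)
  also have "\<dots> \<longleftrightarrow> graph_iso V E {0..<n} (path_edge n) \<or> graph_iso V E {0..<n} (star_edge n)"
    using maximal_ZIr_singleton_path_or_star[OF assms(1,2)]
      maximal_ZIr_singleton_if_path_iso[OF _ assms(3)] maximal_ZIr_singleton_if_star_iso[OF _ assms(3)]
    by blast
  finally show ?thesis .
qed

end
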